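(* For any $n\ge1$, $$\sum_{\pi\in\mathfrak{S}_n(2413,3142)}(-1)^{\mathsf{des}\,\pi}=\begin{cases}0,&n\text{ even},\\(-1)^{(n-1)/2}\,r_{(n-1)/2},&n\text{ odd},\end{cases}$$ where $r_m:=|\mathfrak{A}_{2m+1}(2413,3142)|$.
   Context: $\mathfrak{S}_n(2413,3142)$ is the set of permutations of $[n]$ avoiding both classical patterns $2413$ and $3142$; $\mathfrak{A}_m(2413,3142)$ is the subset of $\mathfrak{S}_m(2413,3142)$ of alternating (up-down) permutations $\pi(1)<\pi(2)>\pi(3)<\cdots$. $\mathsf{des}\,\pi=\#\{i\in[n-1]:\pi(i)>\pi(i+1)\}$. *)

theory Defs
  imports Main "HOL-Combinatorics.Multiset_Permutations"
begin

(* Permutations of [n] are represented in one-line notation as lists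
   [pi(1),...,pi(n)]; list index i (0-based) holds pi(i+1). *)

definition perms :: "nat \<Rightarrow> nat list set" where
  "perms n = permutations_of_set {1..n}"

definition contains :: "nat list \<Rightarrow> nat list \<Rightarrow> bool" where
  "contains p sigma \<longleftrightarrow>
     (\<exists>f. strict_mono_on {..<length sigma} f \<and>
          (\<forall>a<length sigma. f a < length p) \<and>
          (\<forall>a<length sigma. \<forall>b<length sigma.
              (p ! (f a) < p ! (f b)) \<longleftrightarrow> (sigma ! a < sigma ! b)))"

definition avoids :: "nat list \<Rightarrow> nat list \<Rightarrow> bool" where
  "avoids p sigma \<longleftrightarrow> \<not> contains p sigma"

definition sep_perms :: "nat \<Rightarrow> nat list set" where
  "sep_perms n = {p \<in> perms n. avoids p [2,4,1,3] \<and> avoids p [3,1,4,2]}"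

definition alternating :: "nat list \<Rightarrow> bool" where
  "alternating p \<longleftrightarrow>
     (\<forall>i. Suc i < length p \<longrightarrow>
        (if even i then p ! i < p ! Suc i else p ! i > p ! Suc i))"

definition alt_sep_perms :: "nat \<Rightarrow> nat list set" where
  "alt_sep_perms m = {p \<in> sep_perms m. alternating p}"

definition des :: "nat list \<Rightarrow> nat" where
  "des p = card {i. Suc i < length p \<and> p ! i > p ! Suc i}"

definition r :: "nat \<Rightarrow> nat" where
  "r m = card (alt_sep_perms (2*m+1))"

end

theory Submission
  imports Defs
begin

(*
  A separable permutation of length n >= 2 is either plus-decomposable (a direct sum a (+) b)
  or minus-decomposable, never both, and complementation exchanges the two kinds while sending
  des to n - 1 - des and up-down to down-up permutations. Hence the signed descent sum F(n)
  equals (1 + (-1)^(n-1)) G(n), where G(n) is the signed sum over the plus-decomposable ones.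
  Splitting these at their first plus-block, p = a (+) b with a plus-indecomposable, gives
  G(n) = sum_k (F(k) - G(k)) F(n-k); the same splitting gives recurrences for the numbers P(n)
  and Q(n) of plus-decomposable up-down and down-up permutations, and reverse-complement shows
  P(n) = Q(n) for odd n. Induction on n then yields F(n) = 0 for even n and
  F(n) = (-1)^(n div 2) A(n) for odd n, where A(n) counts the up-down ones, jointly with
  G(n) = -(-1)^(n div 2) P(n) for even and G(n) = (-1)^(n div 2) P(n) for odd n.
*)

section \<open>Permutations and pattern occurrences\<close>

lemma perms_iff: "p \<in> perms n \<longleftrightarrow> distinct p \<and> set p = {1..n}"
  unfolding perms_def permutations_of_set_def by auto

lemma length_perms: "p \<in> perms n \<Longrightarrow> length p = n"
  unfolding perms_iff by (metis card_atLeastAtMost diff_Suc_1 distinct_card)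

lemma finite_sep_perms: "finite (sep_perms n)"
  unfolding sep_perms_def perms_def by simp

definition occurs_2413 :: "nat list \<Rightarrow> bool" where
  "occurs_2413 p \<longleftrightarrow>
     (\<exists>i j k l. i < j \<and> j < k \<and> k < l \<and> l < length p \<and> p!k < p!i \<and> p!i < p!l \<and> p!l < p!j)"

definition occurs_3142 :: "nat list \<Rightarrow> bool" where
  "occurs_3142 p \<longleftrightarrow>
     (\<exists>i j k l. i < j \<and> j < k \<and> k < l \<and> l < length p \<and> p!j < p!l \<and> p!l < p!i \<and> p!i < p!k)"

lemma less_4_cases: "(a::nat) < 4 \<longleftrightarrow> a = 0 \<or> a = 1 \<or> a = 2 \<or> a = 3"
  by auto

lemma all_less_4: "(\<forall>a::nat<4. P a) \<longleftrightarrow> P 0 \<and> P 1 \<and> P 2 \<and> (P 3 :: bool)"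
  by (auto simp: less_4_cases)

lemma contains_length_4_iff:
  assumes "length \<sigma> = 4"
  shows "contains p \<sigma> \<longleftrightarrow>
    (\<exists>i j k l. i < j \<and> j < k \<and> k < l \<and> l < length p \<and>
      (\<forall>a<4. \<forall>b<4. p ! ([i,j,k,l] ! a) < p ! ([i,j,k,l] ! b) \<longleftrightarrow> \<sigma> ! a < \<sigma> ! b))"
proof
  assume "contains p \<sigma>"
  then obtain f where f: "strict_mono_on {..<4} f" "\<forall>a<4. f a < length p"
    and order: "\<forall>a<4. \<forall>b<4. p ! f a < p ! f b \<longleftrightarrow> \<sigma> ! a < \<sigma> ! b"
    using assms unfolding contains_def by auto
  have "f 0 < f 1" "f 1 < f 2" "f 2 < f 3" "f 3 < length p"
    using f by (auto intro: strict_mono_onD)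
  moreover have "\<forall>a<4. \<forall>b<4. p ! ([f 0, f 1, f 2, f 3] ! a) < p ! ([f 0, f 1, f 2, f 3] ! b)
      \<longleftrightarrow> \<sigma> ! a < \<sigma> ! b"
    using order unfolding all_less_4 by simp
  ultimately show "\<exists>i j k l. i < j \<and> j < k \<and> k < l \<and> l < length p \<and>
      (\<forall>a<4. \<forall>b<4. p ! ([i,j,k,l] ! a) < p ! ([i,j,k,l] ! b) \<longleftrightarrow> \<sigma> ! a < \<sigma> ! b)"
    by blast
next
  assume "\<exists>i j k l. i < j \<and> j < k \<and> k < l \<and> l < length p \<and>
      (\<forall>a<4. \<forall>b<4. p ! ([i,j,k,l] ! a) < p ! ([i,j,k,l] ! b) \<longleftrightarrow> \<sigma> ! a < \<sigma> ! b)"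
  then obtain i j k l where "i < j" "j < k" "k < l" "l < length p"
    and "\<forall>a<4. \<forall>b<4. p ! ([i,j,k,l] ! a) < p ! ([i,j,k,l] ! b) \<longleftrightarrow> \<sigma> ! a < \<sigma> ! b"
    by blast
  moreover have "strict_mono_on {..<4} (\<lambda>a. [i,j,k,l] ! a)"
    using \<open>i < j\<close> \<open>j < k\<close> \<open>k < l\<close> by (auto simp: strict_mono_on_def less_4_cases)
  ultimately show "contains p \<sigma>"
    using assms unfolding contains_def by (intro exI[of _ "\<lambda>a. [i,j,k,l] ! a"]) (auto simp: less_4_cases)
qed

lemma contains_2413_iff: "contains p [2,4,1,3] \<longleftrightarrow> occurs_2413 p"
proof -
  have "contains p [2,4,1,3] \<longleftrightarrow> (\<exists>i j k l. i < j \<and> j < k \<and> k < l \<and> l < length p \<and>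
      (\<forall>a<4. \<forall>b<4. p ! ([i,j,k,l] ! a) < p ! ([i,j,k,l] ! b) \<longleftrightarrow> [2,4,1,3::nat] ! a < [2,4,1,3::nat] ! b))"
    (is "_ \<longleftrightarrow> (\<exists>i j k l. ?P i j k l)")
    by (rule contains_length_4_iff) simp
  also have "\<dots> \<longleftrightarrow> occurs_2413 p"
  proof
    assume "\<exists>i j k l. ?P i j k l"
    then show "occurs_2413 p"
      unfolding occurs_2413_def all_less_4 by auto
  next
    assume "occurs_2413 p"
    then obtain i j k l where "i < j" "j < k" "k < l" "l < length p" "p ! k < p ! i" "p ! i < p ! l" "p ! l < p ! j"
      unfolding occurs_2413_def by blast
    then have "?P i j k l"
      unfolding all_less_4 by (auto dest: order.strict_trans)
    then show "\<exists>i j k l. ?P i j k l" by blast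
  qed
  finally show ?thesis .
qed

lemma contains_3142_iff: "contains p [3,1,4,2] \<longleftrightarrow> occurs_3142 p"
proof -
  have "contains p [3,1,4,2] \<longleftrightarrow> (\<exists>i j k l. i < j \<and> j < k \<and> k < l \<and> l < length p \<and>
      (\<forall>a<4. \<forall>b<4. p ! ([i,j,k,l] ! a) < p ! ([i,j,k,l] ! b) \<longleftrightarrow> [3,1,4,2::nat] ! a < [3,1,4,2::nat] ! b))"
    (is "_ \<longleftrightarrow> (\<exists>i j k l. ?P i j k l)")
    by (rule contains_length_4_iff) simp
  also have "\<dots> \<longleftrightarrow> occurs_3142 p"
  proof
    assume "\<exists>i j k l. ?P i j k l"
    then show "occurs_3142 p"
      unfolding occurs_3142_def all_less_4 by auto
  next
    assume "occurs_3142 p"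
    then obtain i j k l where "i < j" "j < k" "k < l" "l < length p" "p ! j < p ! l" "p ! l < p ! i" "p ! i < p ! k"
      unfolding occurs_3142_def by blast
    then have "?P i j k l"
      unfolding all_less_4 by (auto dest: order.strict_trans)
    then show "\<exists>i j k l. ?P i j k l" by blast
  qed
  finally show ?thesis .
qed

lemma sep_perms_iff: "p \<in> sep_perms n \<longleftrightarrow> p \<in> perms n \<and> \<not> occurs_2413 p \<and> \<not> occurs_3142 p"
  unfolding sep_perms_def avoids_def contains_2413_iff contains_3142_iff by simp

lemma sep_permsD: "p \<in> sep_perms n \<Longrightarrow> p \<in> perms n"
  by (simp add: sep_perms_iff)

lemma occurs_map_strict_mono:
  assumes "\<forall>x\<in>set p. \<forall>y\<in>set p. g x < g y \<longleftrightarrow> x < y"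
  shows "occurs_2413 (map g p) \<longleftrightarrow> occurs_2413 p" "occurs_3142 (map g p) \<longleftrightarrow> occurs_3142 p"
proof -
  have "\<And>a b. a < length p \<Longrightarrow> b < length p \<Longrightarrow> g (p!a) < g (p!b) \<longleftrightarrow> p!a < p!b"
    using assms by simp
  then show "occurs_2413 (map g p) \<longleftrightarrow> occurs_2413 p" "occurs_3142 (map g p) \<longleftrightarrow> occurs_3142 p"
    unfolding occurs_2413_def occurs_3142_def by (smt (verit) length_map nth_map order.strict_trans)+
qed

lemma occurs_map_strict_antimono:
  assumes "\<forall>x\<in>set p. \<forall>y\<in>set p. g x < g y \<longleftrightarrow> y < x"
  shows "occurs_2413 (map g p) \<longleftrightarrow> occurs_3142 p" "occurs_3142 (map g p) \<longleftrightarrow> occurs_2413 p"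
proof -
  have "\<And>a b. a < length p \<Longrightarrow> b < length p \<Longrightarrow> g (p!a) < g (p!b) \<longleftrightarrow> p!b < p!a"
    using assms by simp
  then show "occurs_2413 (map g p) \<longleftrightarrow> occurs_3142 p" "occurs_3142 (map g p) \<longleftrightarrow> occurs_2413 p"
    unfolding occurs_2413_def occurs_3142_def by (smt (verit) length_map nth_map order.strict_trans)+
qed

lemma occurs_2413_rev: "occurs_2413 (rev p) \<longleftrightarrow> occurs_3142 p"
proof
  let ?n = "length p"
  assume "occurs_2413 (rev p)"
  then obtain i j k l where "i < j" "j < k" "k < l" "l < ?n"
    and "rev p!k < rev p!i" "rev p!i < rev p!l" "rev p!l < rev p!j"
    unfolding occurs_2413_def by auto
  then show "occurs_3142 p"
    unfolding occurs_3142_def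
    by (intro exI[of _ "?n-1-l"] exI[of _ "?n-1-k"] exI[of _ "?n-1-j"] exI[of _ "?n-1-i"])
      (auto simp: rev_nth)
next
  let ?n = "length p"
  assume "occurs_3142 p"
  then obtain i j k l where "i < j" "j < k" "k < l" "l < ?n"
    and "p!j < p!l" "p!l < p!i" "p!i < p!k"
    unfolding occurs_3142_def by auto
  then show "occurs_2413 (rev p)"
    unfolding occurs_2413_def
    by (intro exI[of _ "?n-1-l"] exI[of _ "?n-1-k"] exI[of _ "?n-1-j"] exI[of _ "?n-1-i"])
      (auto simp: rev_nth)
qed

lemma occurs_3142_rev: "occurs_3142 (rev p) \<longleftrightarrow> occurs_2413 p"
  using occurs_2413_rev[of "rev p"] by simp

lemma occurs_take:
  "occurs_2413 (take k p) \<Longrightarrow> occurs_2413 p" "occurs_3142 (take k p) \<Longrightarrow> occurs_3142 p"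
proof -
  assume "occurs_2413 (take k p)"
  then obtain i j a l where "i < j" "j < a" "a < l" "l < length p" "l < k"
    and "p!a < p!i" "p!i < p!l" "p!l < p!j"
    unfolding occurs_2413_def by auto
  then show "occurs_2413 p"
    unfolding occurs_2413_def by blast
next
  assume "occurs_3142 (take k p)"
  then obtain i j a l where "i < j" "j < a" "a < l" "l < length p" "l < k"
    and "p!j < p!l" "p!l < p!i" "p!i < p!a"
    unfolding occurs_3142_def by auto
  then show "occurs_3142 p"
    unfolding occurs_3142_def by blast
qed

lemma occurs_drop:
  "occurs_2413 (drop k p) \<Longrightarrow> occurs_2413 p" "occurs_3142 (drop k p) \<Longrightarrow> occurs_3142 p"
proof -
  assume "occurs_2413 (drop k p)"
  then obtain i j a l where "i < j" "j < a" "a < l" "l < length p - k"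
    and "p!(k+a) < p!(k+i)" "p!(k+i) < p!(k+l)" "p!(k+l) < p!(k+j)"
    unfolding occurs_2413_def by auto
  then show "occurs_2413 p"
    unfolding occurs_2413_def
    by (intro exI[of _ "k+i"] exI[of _ "k+j"] exI[of _ "k+a"] exI[of _ "k+l"]) auto
next
  assume "occurs_3142 (drop k p)"
  then obtain i j a l where "i < j" "j < a" "a < l" "l < length p - k"
    and "p!(k+j) < p!(k+l)" "p!(k+l) < p!(k+i)" "p!(k+i) < p!(k+a)"
    unfolding occurs_3142_def by auto
  then show "occurs_3142 p"
    unfolding occurs_3142_def
    by (intro exI[of _ "k+i"] exI[of _ "k+j"] exI[of _ "k+a"] exI[of _ "k+l"]) auto
qed

lemma occurs_2413_append:
  assumes below: "\<forall>a\<in>set xs. \<forall>b\<in>set ys. a < b" and "occurs_2413 (xs @ ys)"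
  shows "occurs_2413 xs \<or> occurs_2413 ys"
proof -
  let ?p = "xs @ ys" and ?m = "length xs"
  obtain i j k l where idx: "i < j" "j < k" "k < l" "l < length ?p" and val: "?p!k < ?p!i" "?p!i < ?p!l" "?p!l < ?p!j"
    using \<open>occurs_2413 ?p\<close> unfolding occurs_2413_def by blast
  have cross: "?p!a < ?p!b" if "a < ?m" "?m \<le> b" "b < length ?p" for a b
    using below that by (auto simp: nth_append)
  consider "l < ?m" | "?m \<le> i" | "i < ?m" "?m \<le> l" by linarith
  then show ?thesis
  proof cases
    case 1
    then have "occurs_2413 xs"
      unfolding occurs_2413_def using idx val
      by (intro exI[of _ i] exI[of _ j] exI[of _ k] exI[of _ l]) (auto simp: nth_append)
    then show ?thesis ..
  next
    case 2
    then have "occurs_2413 ys"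
      unfolding occurs_2413_def using idx val
      by (intro exI[of _ "i - ?m"] exI[of _ "j - ?m"] exI[of _ "k - ?m"] exI[of _ "l - ?m"])
        (auto simp: nth_append)
    then show ?thesis ..
  next
    case 3
    then have "?p!j < ?p!l \<or> ?p!i < ?p!k"
      using cross idx by (cases "j < ?m") auto
    with val show ?thesis by auto
  qed
qed

lemma occurs_3142_append:
  assumes below: "\<forall>a\<in>set xs. \<forall>b\<in>set ys. a < b" and "occurs_3142 (xs @ ys)"
  shows "occurs_3142 xs \<or> occurs_3142 ys"
proof -
  let ?p = "xs @ ys" and ?m = "length xs"
  obtain i j k l where idx: "i < j" "j < k" "k < l" "l < length ?p" and val: "?p!j < ?p!l" "?p!l < ?p!i" "?p!i < ?p!k"
    using \<open>occurs_3142 ?p\<close> unfolding occurs_3142_def by blast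
  have cross: "?p!a < ?p!b" if "a < ?m" "?m \<le> b" "b < length ?p" for a b
    using below that by (auto simp: nth_append)
  consider "l < ?m" | "?m \<le> i" | "i < ?m" "?m \<le> l" by linarith
  then show ?thesis
  proof cases
    case 1
    then have "occurs_3142 xs"
      unfolding occurs_3142_def using idx val
      by (intro exI[of _ i] exI[of _ j] exI[of _ k] exI[of _ l]) (auto simp: nth_append)
    then show ?thesis ..
  next
    case 2
    then have "occurs_3142 ys"
      unfolding occurs_3142_def using idx val
      by (intro exI[of _ "i - ?m"] exI[of _ "j - ?m"] exI[of _ "k - ?m"] exI[of _ "l - ?m"])
        (auto simp: nth_append)
    then show ?thesis ..
  next
    case 3
    then have "?p!i < ?p!l"
      using cross idx by auto
    with val show ?thesis by auto
  qed
qed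

section \<open>Descents and zigzag sequences\<close>

definition descents :: "nat list \<Rightarrow> nat set" where
  "descents p = {i. Suc i < length p \<and> p!i > p!Suc i}"

lemma des_eq_card_descents: "des p = card (descents p)"
  unfolding des_def descents_def ..

lemma descents_subset: "descents p \<subseteq> {..<length p - 1}"
  unfolding descents_def by auto

lemma des_le: "des p \<le> length p - 1"
  unfolding des_eq_card_descents using card_mono[OF _ descents_subset] by simp

lemma des_map_strict_antimono:
  assumes anti: "\<forall>x\<in>set p. \<forall>y\<in>set p. g x < g y \<longleftrightarrow> y < x" and "distinct p"
  shows "des (map g p) = length p - 1 - des p"
proof -
  have "p!i > p!Suc i \<longleftrightarrow> \<not> p!i < p!Suc i" if "Suc i < length p" for i
    using \<open>distinct p\<close> that nth_eq_iff_index_eq[of p i "Suc i"] by auto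
  then have "descents (map g p) = {..<length p - 1} - descents p"
    using anti unfolding descents_def by (auto simp: less_diff_conv)
  then show ?thesis
    unfolding des_eq_card_descents using descents_subset[of p]
    by (simp add: card_Diff_subset finite_subset)
qed

lemma des_map_shift: "des (map (\<lambda>x. x + c) p) = des p"
  unfolding des_def by (rule arg_cong[of _ _ card]) auto

lemma descents_append:
  assumes "xs \<noteq> []" "ys \<noteq> []" "last xs < hd ys"
  shows "descents (xs @ ys) = descents xs \<union> (\<lambda>i. i + length xs) ` descents ys"
proof (intro set_eqI iffI)
  fix i assume i: "i \<in> descents (xs @ ys)"
  consider "Suc i < length xs" | "Suc i = length xs" | "length xs \<le> i" by linarith
  then show "i \<in> descents xs \<union> (\<lambda>i. i + length xs) ` descents ys"
  proof cases
    case 2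
    then have "i = length xs - 1" by simp
    then have "(xs @ ys) ! i = last xs" "(xs @ ys) ! Suc i = hd ys"
      using 2 assms by (auto simp: nth_append last_conv_nth hd_conv_nth)
    then show ?thesis using i assms(3) unfolding descents_def by auto
  next
    case 3
    then have "i - length xs \<in> descents ys"
      using i unfolding descents_def by (auto simp: nth_append Suc_diff_le)
    then show ?thesis using 3 by (auto intro!: image_eqI[of _ _ "i - length xs"])
  qed (use i in \<open>auto simp: descents_def nth_append\<close>)
qed (auto simp: descents_def nth_append)

lemma des_append:
  assumes "xs \<noteq> []" "ys \<noteq> []" "last xs < hd ys"
  shows "des (xs @ ys) = des xs + des ys"
proof -
  have "finite (descents xs)" "finite (descents ys)"
    using descents_subset finite_subset by blast+
  moreover have "descents xs \<inter> (\<lambda>i. i + length xs) ` descents ys = {}"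
    using descents_subset[of xs] by auto
  ultimately show ?thesis
    unfolding des_eq_card_descents descents_append[OF assms]
    by (simp add: card_Un_disjoint card_image)
qed

text \<open>The flag says whether the first step is an ascent: \<open>zigzag True\<close> is \<open>alternating\<close>
  (up-down), \<open>zigzag False\<close> is down-up.\<close>

definition zigzag :: "bool \<Rightarrow> nat list \<Rightarrow> bool" where
  "zigzag up p \<longleftrightarrow>
     (\<forall>i. Suc i < length p \<longrightarrow> (if even i = up then p!i < p!Suc i else p!i > p!Suc i))"

lemma alternating_eq_zigzag: "alternating = zigzag True"
  unfolding alternating_def zigzag_def by simp

lemma zigzag_map_strict_antimono:
  assumes "\<forall>x\<in>set p. \<forall>y\<in>set p. g x < g y \<longleftrightarrow> y < x"
  shows "zigzag up (map g p) \<longleftrightarrow> zigzag (\<not> up) p"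
  using assms unfolding zigzag_def by (auto simp: if_bool_eq_conj)

lemma zigzag_map_shift: "zigzag up (map (\<lambda>x. x + c) p) \<longleftrightarrow> zigzag up p"
  unfolding zigzag_def by simp

lemma zigzag_rev_if_zigzag:
  assumes "odd (length p)" and "zigzag up p"
  shows "zigzag up (rev p)"
  unfolding zigzag_def
proof (intro allI impI)
  fix i assume i: "Suc i < length (rev p)"
  define j where "j = length p - 2 - i"
  have j: "Suc j < length p" "i + j + 2 = length p" using i unfolding j_def by auto
  then have "even i \<longleftrightarrow> odd j" using assms(1) by presburger
  moreover have "length p - Suc i = Suc j" "length p - Suc (Suc i) = j"
    using j by auto
  then have "rev p ! i = p ! Suc j" "rev p ! Suc i = p ! j"
    using j by (auto simp: rev_nth)
  ultimately show "if even i = up then rev p ! i < rev p ! Suc i else rev p ! i > rev p ! Suc i"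
    using assms(2) j(1) unfolding zigzag_def by (auto split: if_splits)
qed

lemma zigzag_rev: "odd (length p) \<Longrightarrow> zigzag up (rev p) \<longleftrightarrow> zigzag up p"
  using zigzag_rev_if_zigzag[of p] zigzag_rev_if_zigzag[of "rev p"] by auto

lemma all_Suc_less_add_split:
  assumes "0 < m" "0 < n"
  shows "(\<forall>i. Suc i < m + n \<longrightarrow> P i) \<longleftrightarrow>
    (\<forall>i. Suc i < m \<longrightarrow> P i) \<and> P (m - 1) \<and> (\<forall>j. Suc j < n \<longrightarrow> P (m + j))"
proof safe
  fix i assume "\<forall>i. Suc i < m \<longrightarrow> P i" "P (m - 1)" "\<forall>j. Suc j < n \<longrightarrow> P (m + j)" "Suc i < m + n"
  then show "P i" using assms by (cases "Suc i < m"; cases "i = m - 1") (auto dest: spec[of _ "i - m"])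
qed (use assms in auto)

lemma zigzag_append:
  assumes "xs \<noteq> []" "ys \<noteq> []" "last xs < hd ys"
  shows "zigzag up (xs @ ys) \<longleftrightarrow> (up \<longleftrightarrow> odd (length xs)) \<and> zigzag up xs \<and> zigzag False ys"
proof -
  let ?m = "length xs" and ?c = "xs @ ys"
  let ?step = "\<lambda>up p i. if even i = up then p!i < p!Suc i else p!i > p!Suc i"
  have "zigzag up ?c \<longleftrightarrow>
      (\<forall>i. Suc i < ?m \<longrightarrow> ?step up ?c i) \<and> ?step up ?c (?m - 1) \<and>
      (\<forall>j. Suc j < length ys \<longrightarrow> ?step up ?c (?m + j))"
    unfolding zigzag_def using assms by (simp add: all_Suc_less_add_split)
  also have "(\<forall>i. Suc i < ?m \<longrightarrow> ?step up ?c i) \<longleftrightarrow> zigzag up xs"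
    unfolding zigzag_def by (auto simp: nth_append)
  also have "?step up ?c (?m - 1) \<longleftrightarrow> (up \<longleftrightarrow> odd ?m)"
  proof -
    have "?c ! (?m - 1) < ?c ! Suc (?m - 1)"
      using assms by (simp add: nth_append last_conv_nth hd_conv_nth)
    then show ?thesis using assms by (cases ?m) auto
  qed
  also have "(\<forall>j. Suc j < length ys \<longrightarrow> ?step up ?c (?m + j)) \<longleftrightarrow> zigzag (even ?m = up) ys"
    unfolding zigzag_def by (intro all_cong) (auto simp: nth_append)
  finally show ?thesis by auto
qed

section \<open>Complement\<close>

definition complement :: "nat list \<Rightarrow> nat list" where
  "complement p = map (\<lambda>x. Suc (length p) - x) p"

lemma length_complement [simp]: "length (complement p) = length p"
  by (simp add: complement_def)

lemma take_complement: "take k (complement p) = map (\<lambda>x. Suc (length p) - x) (take k p)"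
  by (simp add: complement_def take_map)

lemma complement_rev: "complement (rev p) = rev (complement p)"
  by (simp add: complement_def rev_map)

lemma complement_strict_antimono:
  "p \<in> perms n \<Longrightarrow> \<forall>x\<in>set p. \<forall>y\<in>set p. Suc n - x < Suc n - y \<longleftrightarrow> y < x"
  by (fastforce simp: perms_iff)

lemma image_reflect_atLeastAtMost:
  "b \<le> n \<Longrightarrow> (\<lambda>x. Suc n - x) ` {a..b} = {Suc n - b..Suc n - a}"
proof (intro set_eqI iffI)
  fix y assume "b \<le> n" "y \<in> {Suc n - b..Suc n - a}"
  then show "y \<in> (\<lambda>x. Suc n - x) ` {a..b}"
    by (cases "a \<le> b") (auto intro!: image_eqI[of _ _ "Suc n - y"])
qed auto

lemma complement_perms:
  assumes "p \<in> perms n"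
  shows "complement p \<in> perms n"
proof -
  have "inj_on (\<lambda>x. Suc n - x) (set p)"
    using complement_strict_antimono[OF assms] by (intro inj_onI) (metis less_irrefl linorder_neqE_nat)
  moreover have "(\<lambda>x. Suc n - x) ` {1..n} = {1..n}"
    using image_reflect_atLeastAtMost[of n n 1] by simp
  ultimately show ?thesis
    using assms length_perms[OF assms] by (simp add: complement_def perms_iff distinct_map)
qed

lemma complement_complement: "p \<in> perms n \<Longrightarrow> complement (complement p) = p"
  by (auto simp: complement_def perms_iff length_perms intro!: map_idI)

lemma complement_perms_eq: "p \<in> perms n \<Longrightarrow> complement p = map (\<lambda>x. Suc n - x) p"
  by (simp add: complement_def length_perms)

lemma complement_sep_perms:
  assumes "p \<in> sep_perms n"
  shows "complement p \<in> sep_perms n"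
proof -
  have p: "p \<in> perms n" using assms by (simp add: sep_perms_iff)
  show ?thesis
    using assms complement_perms[OF p] occurs_map_strict_antimono[OF complement_strict_antimono[OF p]]
    by (simp add: sep_perms_iff complement_perms_eq[OF p])
qed

lemma des_complement:
  assumes "p \<in> perms n"
  shows "des (complement p) = n - 1 - des p"
  using des_map_strict_antimono[OF complement_strict_antimono[OF assms]] assms
  unfolding complement_perms_eq[OF assms] length_perms[OF assms] by (simp add: perms_iff)

lemma zigzag_complement: "p \<in> perms n \<Longrightarrow> zigzag up (complement p) \<longleftrightarrow> zigzag (\<not> up) p"
  using zigzag_map_strict_antimono[OF complement_strict_antimono]
  by (simp add: complement_perms_eq)

lemma rev_sep_perms: "p \<in> sep_perms n \<Longrightarrow> rev p \<in> sep_perms n"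
  by (simp add: sep_perms_iff perms_iff occurs_2413_rev occurs_3142_rev)

section \<open>Plus- and minus-decomposable separable permutations\<close>

text \<open>Value-separated cuts make sense for arbitrary distinct lists, which the induction over
  the last entry needs; for permutations they amount to plus- and minus-decomposability.\<close>

definition direct_split :: "nat list \<Rightarrow> nat \<Rightarrow> bool" where
  "direct_split p k \<longleftrightarrow>
     0 < k \<and> k < length p \<and> (\<forall>a\<in>set (take k p). \<forall>b\<in>set (drop k p). a < b)"

definition skew_split :: "nat list \<Rightarrow> nat \<Rightarrow> bool" where
  "skew_split p k \<longleftrightarrow>
     0 < k \<and> k < length p \<and> (\<forall>a\<in>set (take k p). \<forall>b\<in>set (drop k p). b < a)"

lemma split_map_strict_antimono:
  assumes "\<forall>x\<in>set p. \<forall>y\<in>set p. g x < g y \<longleftrightarrow> y < x"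
  shows "direct_split (map g p) k \<longleftrightarrow> skew_split p k"
    and "skew_split (map g p) k \<longleftrightarrow> direct_split p k"
  using assms unfolding direct_split_def skew_split_def
  by (auto simp: take_map drop_map dest: in_set_takeD in_set_dropD)

lemma direct_split_snoc_threshold:
  assumes "0 < t" "t \<le> length q"
    and "\<forall>j<t. q!j < v" "\<forall>j. t \<le> j \<and> j < length q \<longrightarrow> v < q!j"
  shows "direct_split (q @ [v]) t"
proof -
  have "a < v" if "a \<in> set (take t q)" for a
    using that assms(2,3) by (auto simp: in_set_conv_nth)
  moreover have "v < b" if "b \<in> set (drop t q)" for b
    using that assms(2,4) by (auto simp: in_set_conv_nth)
  ultimately show ?thesis
    using assms(1,2) unfolding direct_split_def by fastforce
qed

lemma direct_split_snoc_above:
  assumes split: "direct_split q k" and "v \<notin> set q" and no_3142: "\<not> occurs_3142 (q @ [v])"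
    and t: "t < k" "v < q!t" and j: "t \<le> j" "j < length q"
  shows "v < q!j"
proof -
  have k: "k < length q" and below: "\<forall>a\<in>set (take k q). \<forall>b\<in>set (drop k q). a < b"
    using split unfolding direct_split_def by auto
  have "q!t \<in> set (take k q)"
    using nth_mem[of t "take k q"] t k by auto
  show ?thesis
  proof (cases "j < k")
    case True
    have "q!t < q!k"
      using below \<open>q!t \<in> set (take k q)\<close> nth_mem[of 0 "drop k q"] k by auto
    have "\<not> q!j < v"
    proof
      assume "q!j < v"
      then have "t < j" using j t by (metis le_neq_implies_less order.asym)
      then have "occurs_3142 (q @ [v])"
        unfolding occurs_3142_def using \<open>q!j < v\<close> \<open>q!t < q!k\<close> True t k
        by (intro exI[of _ t] exI[of _ j] exI[of _ k] exI[of _ "length q"]) (auto simp: nth_append)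
      with no_3142 show False ..
    qed
    then show ?thesis
      using \<open>v \<notin> set q\<close> j by (metis linorder_neqE_nat nth_mem)
  next
    case False
    then have "q!j \<in> set (drop k q)"
      using nth_mem[of "j - k" "drop k q"] j by auto
    then show ?thesis using below \<open>q!t \<in> set (take k q)\<close> t by fastforce
  qed
qed

lemma direct_split_snoc_mixed:
  assumes split: "direct_split q k" and "v \<notin> set q" and no_3142: "\<not> occurs_3142 (q @ [v])"
    and "i < k" "v < q!i" "x \<in> set q" "x < v"
  shows "\<exists>t. direct_split (q @ [v]) t"
proof -
  define t where "t = (LEAST t. t < length q \<and> v < q!t)"
  have "k < length q" using split unfolding direct_split_def by simp
  then have t: "t < length q" "v < q!t" "t \<le> i"
    using LeastI[of "\<lambda>t. t < length q \<and> v < q!t" i] Least_le[of _ i] assms(4,5) unfolding t_def by auto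
  have before: "\<forall>j<t. q!j < v"
    using \<open>v \<notin> set q\<close> t(1) not_less_Least[of _ "\<lambda>t. t < length q \<and> v < q!t"]
    unfolding t_def by (metis linorder_neqE_nat nth_mem order.strict_trans)
  have "t < k" using t(3) \<open>i < k\<close> by simp
  then have after: "\<forall>j. t \<le> j \<and> j < length q \<longrightarrow> v < q!j"
    using direct_split_snoc_above[OF split \<open>v \<notin> set q\<close> no_3142 _ t(2)] by auto
  have "0 < t"
    using assms(6,7) after by (metis in_set_conv_nth gr0I less_asym le0)
  then have "direct_split (q @ [v]) t"
    using direct_split_snoc_threshold before after t(1) by simp
  then show ?thesis ..
qed

lemma direct_split_snoc:
  assumes split: "direct_split q k" and "v \<notin> set q" and no_3142: "\<not> occurs_3142 (q @ [v])"
  shows "(\<exists>k. direct_split (q @ [v]) k) \<or> (\<exists>k. skew_split (q @ [v]) k)"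
proof -
  have k: "0 < k" "k < length q" and below: "\<forall>a\<in>set (take k q). \<forall>b\<in>set (drop k q). a < b"
    using split unfolding direct_split_def by auto
  show ?thesis
  proof (cases "\<forall>a\<in>set (take k q). a < v")
    case True
    then have "direct_split (q @ [v]) k" using k below unfolding direct_split_def by auto
    then show ?thesis by blast
  next
    case False
    then obtain a where a: "a \<in> set (take k q)" "\<not> a < v" by blast
    then obtain i where "i < k" "q!i = a" using k by (auto simp: in_set_conv_nth)
    moreover have "a \<noteq> v" using \<open>v \<notin> set q\<close> a(1) in_set_takeD by fastforce
    ultimately have i: "i < k" "v < q!i" using a(2) by auto
    show ?thesis
    proof (cases "\<forall>x\<in>set q. v < x")
      case True
      then have "skew_split (q @ [v]) (length q)" using k unfolding skew_split_def by auto
      then show ?thesis by blast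
    next
      case False
      then obtain x where "x \<in> set q" "\<not> v < x" by blast
      moreover have "x \<noteq> v" using \<open>v \<notin> set q\<close> \<open>x \<in> set q\<close> by blast
      ultimately show ?thesis
        using direct_split_snoc_mixed[OF split \<open>v \<notin> set q\<close> no_3142 i] by auto
    qed
  qed
qed

lemma skew_split_snoc:
  assumes "skew_split q k" and "distinct (q @ [v])" and no_2413: "\<not> occurs_2413 (q @ [v])"
  shows "(\<exists>k. direct_split (q @ [v]) k) \<or> (\<exists>k. skew_split (q @ [v]) k)"
proof -
  define g where "g x = Max (set (q @ [v])) - x" for x
  have anti: "\<forall>x\<in>set (q @ [v]). \<forall>y\<in>set (q @ [v]). g x < g y \<longleftrightarrow> y < x"
    unfolding g_def by (metis List.finite_set Max_ge diff_less_mono2 le_less_trans linorder_not_le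
      diff_le_mono2 not_less_iff_gr_or_eq)
  then have "inj_on g (set (q @ [v]))"
    by (intro inj_onI) (metis less_irrefl linorder_neqE_nat)
  then have "g v \<notin> set (map g q)"
    using assms(2) by (auto simp: inj_on_eq_iff)
  moreover have "direct_split (map g q) k"
    using split_map_strict_antimono(1)[of q g] anti assms(1) by simp
  moreover have "\<not> occurs_3142 (map g q @ [g v])"
    using occurs_map_strict_antimono(2)[OF anti] no_2413 by simp
  ultimately have "(\<exists>k. direct_split (map g (q @ [v])) k) \<or> (\<exists>k. skew_split (map g (q @ [v])) k)"
    using direct_split_snoc by simp
  then show ?thesis using split_map_strict_antimono[OF anti] by blast
qed

lemma separable_has_split:
  assumes "distinct p" "\<not> occurs_2413 p" "\<not> occurs_3142 p" "2 \<le> length p"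
  shows "(\<exists>k. direct_split p k) \<or> (\<exists>k. skew_split p k)"
  using assms
proof (induction p rule: rev_induct)
  case Nil
  then show ?case by simp
next
  case (snoc v q)
  show ?case
  proof (cases "length q < 2")
    case True
    then obtain u where "q = [u]" "u \<noteq> v"
      using snoc.prems(1,4) by (cases q) (auto simp: length_Suc_conv)
    then show ?thesis
      unfolding direct_split_def skew_split_def by (cases "u < v") (auto intro!: exI[of _ 1])
  next
    case False
    have "\<not> occurs_2413 q" "\<not> occurs_3142 q"
      using snoc.prems(2,3) occurs_take[of "length q" "q @ [v]"] by auto
    with False snoc.prems(1) have "(\<exists>k. direct_split q k) \<or> (\<exists>k. skew_split q k)"
      by (intro snoc.IH) auto
    then show ?thesis
    proof
      assume "\<exists>k. direct_split q k"
      then show ?thesis using direct_split_snoc snoc.prems(1,3) by auto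
    next
      assume "\<exists>k. skew_split q k"
      then show ?thesis using skew_split_snoc snoc.prems(1,2) by blast
    qed
  qed
qed

definition plus_decomposable :: "nat list \<Rightarrow> bool" where
  "plus_decomposable p \<longleftrightarrow> (\<exists>k. 0 < k \<and> k < length p \<and> set (take k p) = {1..k})"

definition minus_decomposable :: "nat list \<Rightarrow> bool" where
  "minus_decomposable p \<longleftrightarrow>
     (\<exists>k. 0 < k \<and> k < length p \<and> set (take k p) = {length p - k + 1..length p})"

lemma set_drop_perms:
  assumes "p \<in> perms n"
  shows "set (drop k p) = {1..n} - set (take k p)"
proof -
  have "set (take k p) \<union> set (drop k p) = set p" "set (take k p) \<inter> set (drop k p) = {}"
    using assms by (metis append_take_drop_id set_append, metis append_take_drop_id distinct_append perms_iff)
  then show ?thesis using assms by (auto simp: perms_iff)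
qed

lemma direct_split_plus_decomposable:
  assumes p: "p \<in> perms n" and "direct_split p k"
  shows "plus_decomposable p"
proof -
  let ?S = "set (take k p)"
  have k: "0 < k" "k < n" and less: "\<forall>a\<in>?S. \<forall>b\<in>set (drop k p). a < b"
    using assms length_perms[OF p] unfolding direct_split_def by auto
  have card: "card ?S = k"
    using p k by (simp add: perms_iff length_perms distinct_card)
  have "?S \<subseteq> {1..k}"
  proof
    fix x assume x: "x \<in> ?S"
    have "x \<le> n" using x p by (auto simp: perms_iff dest: in_set_takeD)
    have "{1..x} \<subseteq> ?S"
    proof
      fix y assume y: "y \<in> {1..x}"
      show "y \<in> ?S"
      proof (rule ccontr)
        assume "y \<notin> ?S"
        then have "y \<in> set (drop k p)" using set_drop_perms[OF p] y \<open>x \<le> n\<close> by auto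
        then show False using less x y by fastforce
      qed
    qed
    then have "x \<le> k" using card card_mono[of ?S "{1..x}"] by simp
    moreover have "1 \<le> x" using x p by (auto simp: perms_iff dest: in_set_takeD)
    ultimately show "x \<in> {1..k}" by simp
  qed
  then have "?S = {1..k}" using card by (simp add: card_subset_eq)
  then show ?thesis unfolding plus_decomposable_def using k length_perms[OF p] by auto
qed

lemma minus_decomposable_complement:
  assumes p: "p \<in> perms n" and "plus_decomposable p"
  shows "minus_decomposable (complement p)"
proof -
  obtain k where k: "0 < k" "k < n" "set (take k p) = {1..k}"
    using assms length_perms[OF p] unfolding plus_decomposable_def by auto
  have "set (take k (complement p)) = {n - k + 1..n}"
    using k image_reflect_atLeastAtMost[of k n 1] by (simp add: take_complement length_perms[OF p] Suc_diff_le)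
  then show ?thesis unfolding minus_decomposable_def using k length_perms[OF p] by auto
qed

lemma plus_decomposable_complement:
  assumes p: "p \<in> perms n" and "minus_decomposable p"
  shows "plus_decomposable (complement p)"
proof -
  obtain k where k: "0 < k" "k < n" "set (take k p) = {n - k + 1..n}"
    using assms length_perms[OF p] unfolding minus_decomposable_def by auto
  have "set (take k (complement p)) = {1..k}"
    using k image_reflect_atLeastAtMost[of n n "n - k + 1"] by (simp add: take_complement length_perms[OF p])
  then show ?thesis unfolding plus_decomposable_def using k length_perms[OF p] by auto
qed

lemma plus_decomposable_complement_iff:
  "p \<in> perms n \<Longrightarrow> plus_decomposable (complement p) \<longleftrightarrow> minus_decomposable p"
  using plus_decomposable_complement minus_decomposable_complement complement_perms complement_complement
  by metis

lemma plus_decomposable_rev: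
  assumes p: "p \<in> perms n" and "minus_decomposable p"
  shows "plus_decomposable (rev p)"
proof -
  obtain k where k: "0 < k" "k < n" "set (take k p) = {n - k + 1..n}"
    using assms length_perms[OF p] unfolding minus_decomposable_def by auto
  have "set (take (n - k) (rev p)) = set (drop k p)"
    using k length_perms[OF p] by (simp add: take_rev)
  also have "\<dots> = {1..n - k}"
    using k by (auto simp: set_drop_perms[OF p])
  finally show ?thesis
    unfolding plus_decomposable_def using k length_perms[OF p] by (intro exI[of _ "n - k"]) auto
qed

lemma minus_decomposable_rev:
  assumes p: "p \<in> perms n" and "plus_decomposable p"
  shows "minus_decomposable (rev p)"
proof -
  obtain k where k: "0 < k" "k < n" "set (take k p) = {1..k}"
    using assms length_perms[OF p] unfolding plus_decomposable_def by auto
  have "set (take (n - k) (rev p)) = set (drop k p)"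
    using k length_perms[OF p] by (simp add: take_rev)
  also have "\<dots> = {k + 1..n}"
    using k by (auto simp: set_drop_perms[OF p])
  finally show ?thesis
    unfolding minus_decomposable_def using k length_perms[OF p] by (intro exI[of _ "n - k"]) auto
qed

lemma separable_decomposable:
  assumes "p \<in> sep_perms n" "2 \<le> n"
  shows "plus_decomposable p \<or> minus_decomposable p"
proof -
  have p: "p \<in> perms n" "\<not> occurs_2413 p" "\<not> occurs_3142 p"
    using assms(1) by (auto simp: sep_perms_iff)
  have "(\<exists>k. direct_split p k) \<or> (\<exists>k. skew_split p k)"
    using separable_has_split p assms(2) by (simp add: perms_iff length_perms)
  moreover have "minus_decomposable p" if "skew_split p k" for k
  proof -
    have "direct_split (complement p) k"
      using split_map_strict_antimono(1)[OF complement_strict_antimono[OF p(1)]] that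
      by (simp add: complement_perms_eq[OF p(1)])
    then have "plus_decomposable (complement p)"
      using direct_split_plus_decomposable complement_perms[OF p(1)] by blast
    then show ?thesis using plus_decomposable_complement_iff[OF p(1)] by simp
  qed
  ultimately show ?thesis using direct_split_plus_decomposable[OF p(1)] by blast
qed

lemma not_plus_and_minus_decomposable: "\<not> (plus_decomposable p \<and> minus_decomposable p)"
proof
  assume "plus_decomposable p \<and> minus_decomposable p"
  then obtain k k' where k: "0 < k" "k < length p" "set (take k p) = {1..k}"
    and k': "0 < k'" "k' < length p" "set (take k' p) = {length p - k' + 1..length p}"
    unfolding plus_decomposable_def minus_decomposable_def by blast
  show False
  proof (cases "k \<le> k'")
    case True
    then have "set (take k p) \<subseteq> set (take k' p)" by (metis set_take_subset_set_take)
    then show False using k k' by auto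
  next
    case False
    then have "set (take k' p) \<subseteq> set (take k p)" by (metis nat_le_linear set_take_subset_set_take)
    then show False using k k' by auto
  qed
qed

section \<open>Direct sums\<close>

definition direct_sum :: "nat list \<Rightarrow> nat list \<Rightarrow> nat list" (infixr "\<oplus>" 65) where
  "a \<oplus> b = a @ map (\<lambda>x. x + length a) b"

lemma take_direct_sum: "take (length a) (a \<oplus> b) = a"
  by (simp add: direct_sum_def)

lemma drop_direct_sum: "drop (length a) (a \<oplus> b) = map (\<lambda>x. x + length a) b"
  by (simp add: direct_sum_def)

lemma length_direct_sum [simp]: "length (a \<oplus> b) = length a + length b"
  by (simp add: direct_sum_def)

lemma direct_sum_perms:
  assumes a: "a \<in> perms k" and b: "b \<in> perms m"
  shows "a \<oplus> b \<in> perms (k + m)"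
proof -
  have "set (map (\<lambda>x. x + k) b) = {k + 1..k + m}"
    using b by (auto simp: perms_iff image_iff intro!: bexI[of _ "_ - k"])
  moreover have "distinct (map (\<lambda>x. x + k) b)"
    using b by (simp add: perms_iff distinct_map inj_on_def)
  ultimately show ?thesis
    using a b unfolding direct_sum_def length_perms[OF a] by (auto simp: perms_iff)
qed

lemma direct_sum_sep_perms:
  assumes a: "a \<in> sep_perms k" and b: "b \<in> sep_perms m"
  shows "a \<oplus> b \<in> sep_perms (k + m)"
proof -
  have ap: "a \<in> perms k" and bp: "b \<in> perms m" using a b by (auto simp: sep_perms_iff)
  have below: "\<forall>x\<in>set a. \<forall>y\<in>set (map (\<lambda>x. x + k) b). x < y"
    using ap bp by (auto simp: perms_iff)
  have "\<not> occurs_2413 (map (\<lambda>x. x + k) b)" "\<not> occurs_3142 (map (\<lambda>x. x + k) b)"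
    using b occurs_map_strict_mono[of b "\<lambda>x. x + k"] by (auto simp: sep_perms_iff)
  then have "\<not> occurs_2413 (a \<oplus> b)" "\<not> occurs_3142 (a \<oplus> b)"
    using a occurs_2413_append[OF below] occurs_3142_append[OF below]
    unfolding direct_sum_def length_perms[OF ap] by (auto simp: sep_perms_iff)
  then show ?thesis using direct_sum_perms[OF ap bp] by (simp add: sep_perms_iff)
qed

lemma last_less_hd_direct_sum:
  assumes a: "a \<in> perms k" and b: "b \<in> perms m" and "0 < k" "0 < m"
  shows "last a < hd (map (\<lambda>x. x + k) b)"
proof -
  have "a \<noteq> []" "b \<noteq> []" using assms length_perms by fastforce+
  then have "last a \<in> set a" "hd b \<in> set b" by simp_all
  then have "last a \<le> k" "1 \<le> hd b" using a b by (auto simp: perms_iff)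
  then show ?thesis using \<open>b \<noteq> []\<close> by (simp add: hd_map)
qed

lemma direct_sum_summands_nonempty:
  "a \<in> perms k \<Longrightarrow> b \<in> perms m \<Longrightarrow> 0 < k \<Longrightarrow> 0 < m \<Longrightarrow> a \<noteq> [] \<and> b \<noteq> []"
  using length_perms by fastforce

lemma des_direct_sum:
  assumes "a \<in> perms k" "b \<in> perms m" "0 < k" "0 < m"
  shows "des (a \<oplus> b) = des a + des b"
  using des_append[OF _ _ last_less_hd_direct_sum[OF assms]] direct_sum_summands_nonempty[OF assms]
  unfolding direct_sum_def length_perms[OF assms(1)] by (simp add: des_map_shift)

lemma zigzag_direct_sum:
  assumes "a \<in> perms k" "b \<in> perms m" "0 < k" "0 < m"
  shows "zigzag up (a \<oplus> b) \<longleftrightarrow> (up \<longleftrightarrow> odd k) \<and> zigzag up a \<and> zigzag False b"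
  using zigzag_append[OF _ _ last_less_hd_direct_sum[OF assms]] direct_sum_summands_nonempty[OF assms]
  unfolding direct_sum_def length_perms[OF assms(1)] by (simp add: zigzag_map_shift)

lemma plus_decomposable_direct_sum:
  assumes "a \<in> perms k" "b \<in> perms m" "0 < k" "0 < m"
  shows "plus_decomposable (a \<oplus> b)"
  using assms take_direct_sum[of a b] unfolding plus_decomposable_def length_perms[OF assms(1)]
  by (intro exI[of _ k]) (auto simp: length_perms perms_iff)

definition first_block :: "nat list \<Rightarrow> nat" where
  "first_block p = (LEAST k. 0 < k \<and> k < length p \<and> set (take k p) = {1..k})"

lemma first_block_prefix:
  assumes "plus_decomposable p"
  shows "0 < first_block p" "first_block p < length p" "set (take (first_block p) p) = {1..first_block p}"
  using LeastI_ex[of "\<lambda>k. 0 < k \<and> k < length p \<and> set (take k p) = {1..k}"] assms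
  unfolding plus_decomposable_def first_block_def by blast+

lemma first_block_indecomposable:
  assumes "plus_decomposable p"
  shows "\<not> plus_decomposable (take (first_block p) p)"
proof
  assume "plus_decomposable (take (first_block p) p)"
  then obtain j where "0 < j" "j < first_block p" "set (take j p) = {1..j}"
    unfolding plus_decomposable_def by (auto simp: min_def split: if_splits)
  moreover have "first_block p < length p" using first_block_prefix(2)[OF assms] .
  ultimately show False
    using Least_le[of "\<lambda>k. 0 < k \<and> k < length p \<and> set (take k p) = {1..k}" j]
    unfolding first_block_def by simp
qed

lemma first_block_direct_sum:
  assumes a: "a \<in> perms k" and b: "b \<in> perms m" and "0 < k" "0 < m"
    and "\<not> plus_decomposable a"
  shows "first_block (a \<oplus> b) = k"
  unfolding first_block_def
proof (rule Least_equality)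
  show "0 < k \<and> k < length (a \<oplus> b) \<and> set (take k (a \<oplus> b)) = {1..k}"
    using assms take_direct_sum[of a b] by (simp add: length_perms[OF a] length_perms[OF b] perms_iff)
next
  fix j assume j: "0 < j \<and> j < length (a \<oplus> b) \<and> set (take j (a \<oplus> b)) = {1..j}"
  show "k \<le> j"
  proof (rule ccontr)
    assume "\<not> k \<le> j"
    then have "take j (a \<oplus> b) = take j a" using length_perms[OF a] by (simp add: direct_sum_def)
    then have "plus_decomposable a"
      unfolding plus_decomposable_def using j \<open>\<not> k \<le> j\<close> length_perms[OF a] by (intro exI[of _ j]) auto
    then show False using assms(5) by simp
  qed
qed

lemma perms_prefix_direct_sum:
  assumes p: "p \<in> perms n" and "k \<le> n" and prefix: "set (take k p) = {1..k}"
  shows "take k p \<in> perms k" and "map (\<lambda>x. x - k) (drop k p) \<in> perms (n - k)"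
    and "map (\<lambda>x. x + k) (map (\<lambda>x. x - k) (drop k p)) = drop k p"
    and "take k p \<oplus> map (\<lambda>x. x - k) (drop k p) = p"
proof -
  have suffix: "set (drop k p) = {k + 1..n}"
    using prefix by (auto simp: set_drop_perms[OF p])
  show "take k p \<in> perms k"
    using p prefix by (simp add: perms_iff)
  show shift: "map (\<lambda>x. x + k) (map (\<lambda>x. x - k) (drop k p)) = drop k p"
    using suffix by (auto intro!: map_idI)
  have "distinct (map (\<lambda>x. x - k) (drop k p))"
    using p shift distinct_map[of "\<lambda>x. x + k"] by (metis distinct_drop perms_iff)
  moreover have "set (map (\<lambda>x. x - k) (drop k p)) = {1..n - k}"
    using suffix by (auto simp: image_iff intro!: bexI[of _ "_ + k"])
  ultimately show "map (\<lambda>x. x - k) (drop k p) \<in> perms (n - k)"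
    by (simp add: perms_iff)
  show "take k p \<oplus> map (\<lambda>x. x - k) (drop k p) = p"
    using shift \<open>k \<le> n\<close> length_perms[OF p] by (simp add: direct_sum_def)
qed

lemma sep_perms_prefix_direct_sum:
  assumes p: "p \<in> sep_perms n" and "k \<le> n" and prefix: "set (take k p) = {1..k}"
  shows "take k p \<in> sep_perms k" and "map (\<lambda>x. x - k) (drop k p) \<in> sep_perms (n - k)"
proof -
  have pp: "p \<in> perms n" and avoid: "\<not> occurs_2413 p" "\<not> occurs_3142 p"
    using p by (auto simp: sep_perms_iff)
  note parts = perms_prefix_direct_sum[OF pp \<open>k \<le> n\<close> prefix]
  have "\<not> occurs_2413 (take k p)" "\<not> occurs_3142 (take k p)"
    using avoid occurs_take by blast+
  then show "take k p \<in> sep_perms k"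
    using parts(1) by (simp add: sep_perms_iff)
  let ?b = "map (\<lambda>x. x - k) (drop k p)"
  have "\<not> occurs_2413 (map (\<lambda>x. x + k) ?b)" "\<not> occurs_3142 (map (\<lambda>x. x + k) ?b)"
    unfolding parts(3) using avoid occurs_drop by blast+
  then have "\<not> occurs_2413 ?b" "\<not> occurs_3142 ?b"
    using occurs_map_strict_mono[of ?b "\<lambda>x. x + k"] by simp_all
  then show "?b \<in> sep_perms (n - k)"
    using parts(2) by (simp add: sep_perms_iff)
qed

definition split_first_block :: "nat list \<Rightarrow> nat \<times> nat list \<times> nat list" where
  "split_first_block p = (let k = first_block p in (k, take k p, map (\<lambda>x. x - k) (drop k p)))"

lemma split_first_block_direct_sum:
  assumes a: "a \<in> perms k" and b: "b \<in> perms m" and "0 < k" "0 < m" and "\<not> plus_decomposable a"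
  shows "split_first_block (a \<oplus> b) = (k, a, b)"
proof -
  have "map (\<lambda>x. x - k) (map (\<lambda>x. x + k) b) = b" by (induction b) auto
  then show ?thesis
    using first_block_direct_sum[OF assms] take_direct_sum[of a b] drop_direct_sum[of a b]
      length_perms[OF a]
    by (simp add: split_first_block_def)
qed

lemma direct_sum_split_first_block:
  assumes "p \<in> perms n" and "plus_decomposable p"
  shows "(case split_first_block p of (k, a, b) \<Rightarrow> a \<oplus> b) = p"
  using perms_prefix_direct_sum(4)[OF assms(1) _ first_block_prefix(3)[OF assms(2)]]
    first_block_prefix(2)[OF assms(2)] length_perms[OF assms(1)]
  by (simp add: split_first_block_def Let_def)

lemma split_first_block_in_SIGMA:
  assumes "p \<in> sep_perms n" and "plus_decomposable p"
  shows "split_first_block p \<in>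
    (SIGMA k:{1..<n}. {a \<in> sep_perms k. \<not> plus_decomposable a} \<times> sep_perms (n - k))"
proof -
  let ?k = "first_block p"
  have "length p = n" using assms(1) by (auto simp: sep_perms_iff length_perms)
  then have "?k \<in> {1..<n}" "?k \<le> n"
    using first_block_prefix(1,2)[OF assms(2)] by auto
  then show ?thesis
    using sep_perms_prefix_direct_sum[OF assms(1) _ first_block_prefix(3)[OF assms(2)]]
      first_block_indecomposable[OF assms(2)]
    by (simp add: split_first_block_def Let_def)
qed

lemma bij_betw_direct_sum:
  "bij_betw (\<lambda>(k, a, b). a \<oplus> b)
     (SIGMA k:{1..<n}. {a \<in> sep_perms k. \<not> plus_decomposable a} \<times> sep_perms (n - k))
     {p \<in> sep_perms n. plus_decomposable p}"
  (is "bij_betw ?f ?A ?B")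
proof (rule bij_betwI[where g = split_first_block])
  show "?f \<in> ?A \<rightarrow> ?B"
  proof
    fix t assume "t \<in> ?A"
    then obtain k a b where t: "t = (k, a, b)" "k \<in> {1..<n}" "a \<in> sep_perms k" "b \<in> sep_perms (n - k)"
      by auto
    then have "a \<in> perms k" "b \<in> perms (n - k)" "0 < k" "0 < n - k"
      by (auto dest: sep_permsD)
    then show "?f t \<in> ?B"
      using t direct_sum_sep_perms[OF t(3,4)] plus_decomposable_direct_sum by auto
  qed
  show "split_first_block \<in> ?B \<rightarrow> ?A"
    using split_first_block_in_SIGMA by blast
  show "split_first_block (?f t) = t" if "t \<in> ?A" for t
    using that split_first_block_direct_sum by (force dest: sep_permsD)
  show "?f (split_first_block p) = p" if "p \<in> ?B" for p
    using that direct_sum_split_first_block by (auto dest: sep_permsD)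
qed

section \<open>Sums over separable permutations\<close>

definition sep_sum :: "(nat list \<Rightarrow> 'a::comm_ring_1) \<Rightarrow> nat \<Rightarrow> 'a" where
  "sep_sum f n = (\<Sum>p\<in>sep_perms n. f p)"

definition plus_sum :: "(nat list \<Rightarrow> 'a::comm_ring_1) \<Rightarrow> nat \<Rightarrow> 'a" where
  "plus_sum f n = (\<Sum>p\<in>{p \<in> sep_perms n. plus_decomposable p}. f p)"

lemma sum_plus_indecomposable:
  "(\<Sum>a\<in>{a \<in> sep_perms k. \<not> plus_decomposable a}. f a) = sep_sum f k - plus_sum f k"
proof -
  have "sep_sum f k = plus_sum f k + (\<Sum>a\<in>{a \<in> sep_perms k. \<not> plus_decomposable a}. f a)"
    unfolding sep_sum_def plus_sum_def
    using sum.Int_Diff[OF finite_sep_perms, of f k "Collect plus_decomposable"]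
    by (simp add: set_diff_eq Int_def)
  then show ?thesis by simp
qed

lemma plus_sum_direct_sum:
  assumes mult: "\<And>k m a b. 0 < k \<Longrightarrow> 0 < m \<Longrightarrow> a \<in> sep_perms k \<Longrightarrow> b \<in> sep_perms m \<Longrightarrow>
      w (a \<oplus> b) = c k * u a * v b"
  shows "plus_sum w n = (\<Sum>k = 1..<n. c k * (sep_sum u k - plus_sum u k) * sep_sum v (n - k))"
proof -
  let ?A = "SIGMA k:{1..<n}. {a \<in> sep_perms k. \<not> plus_decomposable a} \<times> sep_perms (n - k)"
  have "plus_sum w n = (\<Sum>(k, a, b)\<in>?A. w (a \<oplus> b))"
    unfolding plus_sum_def using sum.reindex_bij_betw[OF bij_betw_direct_sum, of w n]
    by (simp add: case_prod_unfold)
  also have "\<dots> = (\<Sum>k = 1..<n. \<Sum>a\<in>{a \<in> sep_perms k. \<not> plus_decomposable a}.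
      \<Sum>b\<in>sep_perms (n - k). w (a \<oplus> b))"
    by (simp add: sum.Sigma finite_sep_perms)
  also have "\<dots> = (\<Sum>k = 1..<n. \<Sum>a\<in>{a \<in> sep_perms k. \<not> plus_decomposable a}.
      \<Sum>b\<in>sep_perms (n - k). c k * u a * v b)"
    by (intro sum.cong refl mult) auto
  also have "\<dots> = (\<Sum>k = 1..<n. c k * (\<Sum>a\<in>{a \<in> sep_perms k. \<not> plus_decomposable a}. u a) *
      (\<Sum>b\<in>sep_perms (n - k). v b))"
    by (simp add: sum_distrib_left sum_distrib_right mult_ac)
  also have "\<dots> = (\<Sum>k = 1..<n. c k * (sep_sum u k - plus_sum u k) * sep_sum v (n - k))"
    by (simp add: sum_plus_indecomposable sep_sum_def)
  finally show ?thesis .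
qed

lemma sep_sum_complement: "sep_sum (\<lambda>p. f (complement p)) n = sep_sum f n"
  unfolding sep_sum_def
  by (rule sum.reindex_bij_witness[where i = complement and j = complement])
    (auto simp: complement_sep_perms complement_complement dest: sep_permsD)

lemma sep_sum_eq_plus_sum:
  assumes "2 \<le> n"
  shows "sep_sum f n = plus_sum f n + plus_sum (\<lambda>p. f (complement p)) n"
proof -
  let ?P = "{p \<in> sep_perms n. plus_decomposable p}" and ?M = "{p \<in> sep_perms n. minus_decomposable p}"
  have split: "sep_perms n = ?P \<union> ?M" and "?P \<inter> ?M = {}"
    using separable_decomposable[OF _ assms] not_plus_and_minus_decomposable by auto
  have "sep_sum f n = sum f (?P \<union> ?M)"
    unfolding sep_sum_def using arg_cong[OF split, of "sum f"] .
  also have "\<dots> = plus_sum f n + (\<Sum>p\<in>?M. f p)"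
    unfolding plus_sum_def using \<open>?P \<inter> ?M = {}\<close> by (simp add: sum.union_disjoint finite_sep_perms)
  also have "(\<Sum>p\<in>?M. f p) = plus_sum (\<lambda>p. f (complement p)) n"
    unfolding plus_sum_def
    by (rule sum.reindex_bij_witness[where i = complement and j = complement])
      (auto simp: complement_sep_perms complement_complement plus_decomposable_complement_iff
        minus_decomposable_complement
        dest: sep_permsD)
  finally show ?thesis .
qed

text \<open>Reverse and complement each exchange plus- and minus-decomposability, so their
  composite is a bijection on the plus-decomposable separable permutations.\<close>

lemma plus_sum_rev_complement: "plus_sum (\<lambda>p. f (rev (complement p))) n = plus_sum f n"
proof -
  have "plus_decomposable (rev (complement p)) \<longleftrightarrow> plus_decomposable p" if "p \<in> perms n" for p
    using that plus_decomposable_rev minus_decomposable_rev plus_decomposable_complement_iff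
      complement_perms complement_rev by (metis perms_iff rev_rev_ident set_rev distinct_rev)
  moreover have "rev (complement (rev (complement p))) = p" if "p \<in> perms n" for p
    using that by (simp add: complement_rev complement_complement)
  ultimately show ?thesis
    unfolding plus_sum_def
    by (intro sum.reindex_bij_witness[where i = "\<lambda>p. rev (complement p)" and j = "\<lambda>p. rev (complement p)"])
      (auto simp: complement_sep_perms rev_sep_perms dest: sep_permsD)
qed

abbreviation sign_sum :: "nat \<Rightarrow> int" where
  "sign_sum \<equiv> sep_sum (\<lambda>p. (-1) ^ des p)"

abbreviation plus_sign_sum :: "nat \<Rightarrow> int" where
  "plus_sign_sum \<equiv> plus_sum (\<lambda>p. (-1) ^ des p)"

abbreviation zigzag_count :: "bool \<Rightarrow> nat \<Rightarrow> int" where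
  "zigzag_count up \<equiv> sep_sum (\<lambda>p. of_bool (zigzag up p))"

abbreviation plus_zigzag_count :: "bool \<Rightarrow> nat \<Rightarrow> int" where
  "plus_zigzag_count up \<equiv> plus_sum (\<lambda>p. of_bool (zigzag up p))"

lemma neg_one_power_diff: "d \<le> m \<Longrightarrow> (-1::'a::ring_1) ^ (m - d) = (-1) ^ m * (-1) ^ d"
  by (simp add: minus_one_power_iff)

lemma sign_sum_eq_plus_sign_sum:
  assumes "2 \<le> n"
  shows "sign_sum n = (1 + (-1) ^ (n - 1)) * plus_sign_sum n"
proof -
  have "(-1::int) ^ des (complement p) = (-1) ^ (n - 1) * (-1) ^ des p" if "p \<in> perms n" for p
    using des_complement[OF that] des_le[of p] length_perms[OF that] neg_one_power_diff[of "des p" "n - 1"]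
    by simp
  then have "plus_sum (\<lambda>p. (-1::int) ^ des (complement p)) n = (-1) ^ (n - 1) * plus_sign_sum n"
    unfolding plus_sum_def sum_distrib_left by (intro sum.cong refl) (auto dest: sep_permsD)
  then show ?thesis
    using sep_sum_eq_plus_sum[OF assms, of "\<lambda>p. (-1::int) ^ des p"] by (simp add: algebra_simps)
qed

lemma plus_sign_sum_rec:
  "plus_sign_sum n = (\<Sum>k = 1..<n. (sign_sum k - plus_sign_sum k) * sign_sum (n - k))"
proof -
  have "plus_sign_sum n = (\<Sum>k = 1..<n. 1 * (sign_sum k - plus_sign_sum k) * sign_sum (n - k))"
    by (rule plus_sum_direct_sum) (auto simp: des_direct_sum power_add dest!: sep_permsD)
  then show ?thesis by simp
qed

lemma zigzag_count_down_up: "zigzag_count False n = zigzag_count True n"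
proof -
  have "zigzag_count True n = sep_sum (\<lambda>p. of_bool (zigzag True (complement p))) n"
    by (rule sep_sum_complement[symmetric])
  also have "\<dots> = zigzag_count False n"
    unfolding sep_sum_def by (intro sum.cong refl) (auto simp: zigzag_complement dest!: sep_permsD)
  finally show ?thesis by simp
qed

lemma zigzag_count_eq_plus_zigzag_count:
  assumes "2 \<le> n"
  shows "zigzag_count up n = plus_zigzag_count up n + plus_zigzag_count (\<not> up) n"
proof -
  have "plus_sum (\<lambda>p. of_bool (zigzag up (complement p))) n = plus_zigzag_count (\<not> up) n"
    unfolding plus_sum_def by (intro sum.cong refl) (auto simp: zigzag_complement dest!: sep_permsD)
  then show ?thesis
    using sep_sum_eq_plus_sum[OF assms, of "\<lambda>p. of_bool (zigzag up p) :: int"] by simp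
qed

lemma plus_zigzag_count_rec:
  "plus_zigzag_count up n =
     (\<Sum>k = 1..<n. of_bool (up \<longleftrightarrow> odd k) * (zigzag_count up k - plus_zigzag_count up k) *
        zigzag_count False (n - k))"
  by (rule plus_sum_direct_sum) (auto simp: zigzag_direct_sum dest!: sep_permsD)

lemma plus_zigzag_count_odd:
  assumes "odd n"
  shows "plus_zigzag_count True n = plus_zigzag_count False n"
proof -
  have "plus_zigzag_count True n = plus_sum (\<lambda>p. of_bool (zigzag True (rev (complement p)))) n"
    by (rule plus_sum_rev_complement[symmetric])
  also have "\<dots> = plus_zigzag_count False n"
    unfolding plus_sum_def using assms
    by (intro sum.cong refl) (auto simp: zigzag_rev zigzag_complement length_perms dest: sep_permsD)
  finally show ?thesis .
qed

section \<open>The closed forms\<close>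

lemma neg_one_power_half_add:
  "(-1::int) ^ ((k + m) div 2) = (if odd k \<and> odd m then -1 else 1) * (-1) ^ (k div 2) * (-1) ^ (m div 2)"
proof -
  have "(k + m) div 2 = k div 2 + m div 2 + of_bool (odd k \<and> odd m)"
    by (cases "even k"; cases "even m") (auto elim!: evenE oddE)
  then show ?thesis by (simp add: power_add)
qed

text \<open>The second conjunct is the companion invariant that carries the induction.\<close>

definition closed_forms :: "nat \<Rightarrow> bool" where
  "closed_forms n \<longleftrightarrow>
     sign_sum n = (if even n then 0 else (-1) ^ (n div 2) * zigzag_count True n) \<and>
     plus_sign_sum n = (if even n then -1 else 1) * (-1) ^ (n div 2) * plus_zigzag_count True n"

lemma sep_perms_one: "sep_perms 1 = {[1]}"
proof -
  have "perms 1 = {[1]}"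
    unfolding perms_def by simp
  moreover have "\<not> occurs_2413 [1]" "\<not> occurs_3142 [1]"
    unfolding occurs_2413_def occurs_3142_def by auto
  ultimately show ?thesis
    unfolding sep_perms_def avoids_def contains_2413_iff contains_3142_iff by auto
qed

lemma closed_forms_one: "closed_forms 1"
proof -
  have "\<not> plus_decomposable [1]"
    unfolding plus_decomposable_def by auto
  then show ?thesis
    unfolding closed_forms_def sep_sum_def plus_sum_def sep_perms_one
    by (simp add: des_def zigzag_def)
qed

lemma closed_forms_even:
  assumes "even n" "2 \<le> n" and IH: "\<And>k. 1 \<le> k \<Longrightarrow> k < n \<Longrightarrow> closed_forms k"
  shows "closed_forms n"
proof -
  let ?s = "\<lambda>k. (-1::int) ^ (k div 2)"
  have summand: "(sign_sum k - plus_sign_sum k) * sign_sum (n - k) =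
      - ?s n * (of_bool (True \<longleftrightarrow> odd k) * (zigzag_count True k - plus_zigzag_count True k) *
        zigzag_count False (n - k))" if k: "k \<in> {1..<n}" for k
  proof (cases "odd k")
    case True
    have cf: "closed_forms k" "closed_forms (n - k)" using IH k by auto
    have "odd (n - k)" using True \<open>even n\<close> k by auto
    then have "?s n = - ?s k * ?s (n - k)"
      using neg_one_power_half_add[of k "n - k"] True k by simp
    then show ?thesis
      using cf k True \<open>odd (n - k)\<close> zigzag_count_down_up[of "n - k"]
      unfolding closed_forms_def by (simp add: algebra_simps)
  next
    case False
    then have "sign_sum (n - k) = 0"
      using IH[of "n - k"] \<open>even n\<close> k unfolding closed_forms_def by auto
    then show ?thesis using False by simp
  qed
  have "plus_sign_sum n = - ?s n * plus_zigzag_count True n"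
    unfolding plus_sign_sum_rec[of n] plus_zigzag_count_rec[of True n] sum_distrib_left
    by (rule sum.cong) (simp_all add: summand)
  moreover have "sign_sum n = 0"
    using sign_sum_eq_plus_sign_sum[OF \<open>2 \<le> n\<close>] assms(1,2) by simp
  ultimately show ?thesis
    unfolding closed_forms_def using \<open>even n\<close> by simp
qed

lemma closed_forms_odd:
  assumes "odd n" "2 \<le> n" and IH: "\<And>k. 1 \<le> k \<Longrightarrow> k < n \<Longrightarrow> closed_forms k"
  shows "closed_forms n"
proof -
  let ?s = "\<lambda>k. (-1::int) ^ (k div 2)"
  have summand: "(sign_sum k - plus_sign_sum k) * sign_sum (n - k) =
      ?s n * (of_bool (False \<longleftrightarrow> odd k) * (zigzag_count False k - plus_zigzag_count False k) *
        zigzag_count False (n - k))" if k: "k \<in> {1..<n}" for k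
  proof (cases "even k")
    case True
    have cf: "closed_forms k" "closed_forms (n - k)" using IH k by auto
    have "odd (n - k)" using True \<open>odd n\<close> k by auto
    then have "?s n = ?s k * ?s (n - k)"
      using neg_one_power_half_add[of k "n - k"] True k by simp
    moreover have "2 \<le> k" using True k by (auto elim: evenE)
    then have "zigzag_count True k - plus_zigzag_count False k = plus_zigzag_count True k"
      using zigzag_count_eq_plus_zigzag_count[of k True] by simp
    ultimately show ?thesis
      using cf k True \<open>odd (n - k)\<close> zigzag_count_down_up[of k] zigzag_count_down_up[of "n - k"]
      unfolding closed_forms_def by (simp add: algebra_simps)
  next
    case False
    then have "sign_sum (n - k) = 0"
      using IH[of "n - k"] \<open>odd n\<close> k unfolding closed_forms_def by auto
    then show ?thesis using False by simp
  qed
  have "plus_sign_sum n = ?s n * plus_zigzag_count False n"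
    unfolding plus_sign_sum_rec[of n] plus_zigzag_count_rec[of False n] sum_distrib_left
    by (rule sum.cong) (simp_all add: summand)
  then have "plus_sign_sum n = ?s n * plus_zigzag_count True n"
    using plus_zigzag_count_odd[OF \<open>odd n\<close>] by simp
  moreover have "sign_sum n = 2 * plus_sign_sum n"
    using sign_sum_eq_plus_sign_sum[OF \<open>2 \<le> n\<close>] \<open>odd n\<close> by simp
  moreover have "zigzag_count True n = 2 * plus_zigzag_count True n"
    using zigzag_count_eq_plus_zigzag_count[OF \<open>2 \<le> n\<close>, of True] plus_zigzag_count_odd[OF \<open>odd n\<close>]
    by simp
  ultimately show ?thesis
    unfolding closed_forms_def using \<open>odd n\<close> by simp
qed

lemma closed_forms_holds: "1 \<le> n \<Longrightarrow> closed_forms n"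
proof (induction n rule: less_induct)
  case (less n)
  show ?case
  proof (cases "n = 1")
    case True
    then show ?thesis using closed_forms_one by simp
  next
    case False
    then have "2 \<le> n" using less.prems by simp
    then show ?thesis
      using closed_forms_even closed_forms_odd less.IH by blast
  qed
qed

lemma zigzag_count_eq_card_alt_sep_perms: "zigzag_count True m = int (card (alt_sep_perms m))"
  unfolding sep_sum_def alt_sep_perms_def alternating_eq_zigzag
  by (simp add: finite_sep_perms Int_def)

theorem theorem6p5:
  fixes n :: nat
  assumes "n \<ge> 1"
  shows "(\<Sum>p\<in>sep_perms n. (-1::int) ^ des p) =
           (if even n then 0 else (-1) ^ ((n - 1) div 2) * int (r ((n - 1) div 2)))"
proof -
  have "sign_sum n = (if even n then 0 else (-1) ^ (n div 2) * zigzag_count True n)"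
    using closed_forms_holds[OF assms] unfolding closed_forms_def by blast
  moreover have "odd n \<Longrightarrow> 2 * ((n - 1) div 2) + 1 = n \<and> n div 2 = (n - 1) div 2"
    using assms by presburger
  ultimately show ?thesis
    unfolding r_def by (auto simp: zigzag_count_eq_card_alt_sep_perms sep_sum_def)
qed

end
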